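(* Let $s\ge1$ be an integer, $\Sigma_*=\{-s,\dots,-1,1,\dots,s\}$, and for $n\ge0$ let $T_n\subseteq\Sigma_*^n$ be the set of strings $t_1\cdots t_n$ such that there is no index $j$ with $t_j=m\in\{1,\dots,s\}$ and $t_{j+1}=-m$ (with $T_0$ consisting of the empty string). Then $|T_0|=1$, $|T_1|=2s$, and $|T_{n+2}|=2s|T_{n+1}|-s|T_n|$ for all $n\ge0$. Moreover, for $s\ge2$, $$|T_n|=\frac{s^n}{2\sqrt{1-1/s}}\left\{\left(1+\sqrt{1-1/s}\right)^{n+1}-\left(1-\sqrt{1-1/s}\right)^{n+1}\right\},$$ and asymptotically $|T_n|\approx\frac{1+\sqrt{1-1/s}}{2\sqrt{1-1/s}}\left[s\left(1+\sqrt{1-1/s}\right)\right]^n$, in the sense that the ratio of the two sides tends to $1$ as $n\to\infty$. *)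

theory Defs
  imports "HOL-Analysis.Analysis"
begin

definition Sigma_star :: "nat \<Rightarrow> int set" where
  "Sigma_star s = {-int s..-1} \<union> {1..int s}"

definition T_strings :: "nat \<Rightarrow> nat \<Rightarrow> int list set" where
  "T_strings s n = {t. length t = n \<and> set t \<subseteq> Sigma_star s \<and>
     \<not> (\<exists>j. j + 1 < n \<and> t ! j \<in> {1..int s} \<and> t ! (j+1) = - (t ! j))}"

end

theory Submission
  imports Defs
begin

(* Prepending any of the 2s letters to an admissible string of length n + 1 gives a string
   of length n + 2 that is inadmissible exactly when it starts with a cancelling pair m (-m);
   since -m never starts a cancelling pair, those strings are m (-m) u with u admissible of
   length n. Hence |T (n+2)| = 2s |T (n+1)| - s |T n|, whose characteristic roots
   s (1 +- sqrt (1 - 1/s)) give the Binet-type closed form; their ratio has absolute value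
   below 1, which gives the asymptotics. *)

lemma successively_iff_nth:
  "successively P xs \<longleftrightarrow> (\<forall>j. j + 1 < length xs \<longrightarrow> P (xs ! j) (xs ! (j + 1)))"
proof (induction P xs rule: successively.induct)
  case (3 P x y xs)
  then show ?case
    by (simp add: All_less_Suc2 flip: Suc_eq_plus1 less_diff_conv)
qed simp_all

lemma linear_recurrence_closed_form:
  fixes u :: "nat \<Rightarrow> 'a::comm_ring_1"
  assumes "u 0 = 1" and "u 1 = a + b"
    and "\<And>n. u (n + 2) = (a + b) * u (n + 1) - a * b * u n"
  shows "(a - b) * u n = a ^ (n + 1) - b ^ (n + 1)"
proof -
  have "(a - b) * u n = a ^ (n + 1) - b ^ (n + 1)
      \<and> (a - b) * u (n + 1) = a ^ (n + 2) - b ^ (n + 2)"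
  proof (induction n)
    case 0
    then show ?case using assms(1,2) by (simp add: algebra_simps power2_eq_square)
  next
    case (Suc n)
    have "(a - b) * u (n + 2) = (a + b) * ((a - b) * u (n + 1)) - a * b * ((a - b) * u n)"
      unfolding assms(3) by (simp add: algebra_simps)
    also have "\<dots> = (a + b) * (a ^ (n + 2) - b ^ (n + 2)) - a * b * (a ^ (n + 1) - b ^ (n + 1))"
      using Suc.IH by simp
    also have "\<dots> = a ^ (n + 3) - b ^ (n + 3)"
      by (simp add: algebra_simps numeral_3_eq_3 numeral_2_eq_2)
    finally show ?case using Suc.IH by (simp add: numeral_3_eq_3 numeral_2_eq_2)
  qed
  then show ?thesis ..
qed

definition words_avoiding :: "'a set \<Rightarrow> ('a \<Rightarrow> 'a \<Rightarrow> bool) \<Rightarrow> nat \<Rightarrow> 'a list set" where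
  "words_avoiding A R n = {w. length w = n \<and> set w \<subseteq> A \<and> successively (\<lambda>x y. \<not> R x y) w}"

lemma finite_words_avoiding: "finite A \<Longrightarrow> finite (words_avoiding A R n)"
  unfolding words_avoiding_def
  by (rule finite_subset[OF _ finite_lists_length_eq[of A n]]) auto

lemma words_avoiding_0: "words_avoiding A R 0 = {[]}"
  by (auto simp: words_avoiding_def)

lemma words_avoiding_1: "words_avoiding A R 1 = (\<lambda>x. [x]) ` A"
  by (auto simp: words_avoiding_def length_Suc_conv)

lemma card_words_avoiding_1: "card (words_avoiding A R 1) = card A"
  unfolding words_avoiding_1 by (simp add: card_image inj_on_def)

lemma Cons_in_words_avoiding:
  "x # w \<in> words_avoiding A R (Suc n) \<longleftrightarrow>
     x \<in> A \<and> w \<in> words_avoiding A R n \<and> (w = [] \<or> \<not> R x (hd w))"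
  by (auto simp: words_avoiding_def successively_Cons)

lemma card_words_avoiding_Suc_Suc:
  assumes "finite A" and no_overlap: "\<And>x y z. R x y \<Longrightarrow> \<not> R y z"
  shows "card (words_avoiding A R (n + 2)) + card {(x, y) \<in> A \<times> A. R x y} * card (words_avoiding A R n)
    = card A * card (words_avoiding A R (n + 1))"
proof -
  let ?W = "words_avoiding A R"
  define forbidden where "forbidden = {(x, y) \<in> A \<times> A. R x y}"
  define extended where "extended = (\<lambda>((x, y), u). x # y # u) ` (forbidden \<times> ?W n)"
  have prepend: "(\<lambda>(x, w). x # w) ` (A \<times> ?W (n + 1)) = ?W (n + 2) \<union> extended"
  proof (intro equalityI subsetI)
    fix v assume "v \<in> (\<lambda>(x, w). x # w) ` (A \<times> ?W (n + 1))"
    then obtain x y u where v: "v = x # y # u" "x \<in> A" "y # u \<in> ?W (Suc n)"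
      by (auto simp: words_avoiding_def length_Suc_conv)
    show "v \<in> ?W (n + 2) \<union> extended"
    proof (cases "R x y")
      case True
      then have "((x, y), u) \<in> forbidden \<times> ?W n"
        using v by (simp add: forbidden_def Cons_in_words_avoiding)
      then show ?thesis
        unfolding extended_def v(1) by (intro UnI2 image_eqI[of _ _ "((x, y), u)"]) auto
    qed (use v in \<open>simp add: Cons_in_words_avoiding\<close>)
  next
    fix v assume "v \<in> ?W (n + 2) \<union> extended"
    then obtain x w where "v = x # w" "x \<in> A" "w \<in> ?W (n + 1)"
      using no_overlap
      by (auto simp: extended_def forbidden_def words_avoiding_def length_Suc_conv successively_Cons)
    then show "v \<in> (\<lambda>(x, w). x # w) ` (A \<times> ?W (n + 1))" by auto
  qed
  have "card ((\<lambda>(x, w). x # w) ` (A \<times> ?W (n + 1))) = card A * card (?W (n + 1))"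
    by (simp add: card_image inj_on_def card_cartesian_product)
  moreover have "?W (n + 2) \<inter> extended = {}"
    by (auto simp: extended_def forbidden_def words_avoiding_def)
  moreover have "finite forbidden"
    using assms(1) by (auto simp: forbidden_def intro: finite_subset[of _ "A \<times> A"])
  then have "finite extended"
    using assms(1) by (simp add: extended_def finite_words_avoiding)
  ultimately have "card A * card (?W (n + 1)) = card (?W (n + 2)) + card extended"
    using prepend assms(1) by (simp add: card_Un_disjoint finite_words_avoiding)
  moreover have "card extended = card forbidden * card (?W n)"
    unfolding extended_def by (subst card_image) (auto simp: inj_on_def card_cartesian_product)
  ultimately show ?thesis by (simp add: forbidden_def)
qed

definition cancels :: "nat \<Rightarrow> int \<Rightarrow> int \<Rightarrow> bool" where
  "cancels s x y \<longleftrightarrow> x \<in> {1..int s} \<and> y = - x"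

lemma T_strings_eq_words_avoiding: "T_strings s n = words_avoiding (Sigma_star s) (cancels s) n"
  by (auto simp: T_strings_def words_avoiding_def cancels_def successively_iff_nth)

lemma finite_Sigma_star: "finite (Sigma_star s)"
  by (simp add: Sigma_star_def)

lemma card_Sigma_star: "card (Sigma_star s) = 2 * s"
proof -
  have "card (Sigma_star s) = card {-int s..-1} + card {1..int s}"
    unfolding Sigma_star_def by (rule card_Un_disjoint) auto
  then show ?thesis by simp
qed

lemma card_cancelling_pairs: "card {(x, y) \<in> Sigma_star s \<times> Sigma_star s. cancels s x y} = s"
proof -
  have "{(x, y) \<in> Sigma_star s \<times> Sigma_star s. cancels s x y} = (\<lambda>m. (m, - m)) ` {1..int s}"
    by (auto simp: Sigma_star_def cancels_def)
  then show ?thesis by (simp add: card_image inj_on_def)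
qed

lemma card_T_strings_Suc_Suc:
  "card (T_strings s (n + 2)) + s * card (T_strings s n) = 2 * s * card (T_strings s (n + 1))"
proof -
  have no_overlap: "\<And>x y z. cancels s x y \<Longrightarrow> \<not> cancels s y z"
    by (auto simp: cancels_def)
  from card_words_avoiding_Suc_Suc[of "Sigma_star s" "cancels s", OF finite_Sigma_star no_overlap]
  show ?thesis
    by (simp only: T_strings_eq_words_avoiding card_cancelling_pairs card_Sigma_star)
qed

lemma card_T_strings_recurrence:
  "real (card (T_strings s (n + 2)))
     = 2 * real s * real (card (T_strings s (n + 1))) - real s * real (card (T_strings s n))"
  using arg_cong[OF card_T_strings_Suc_Suc[of s n], of real] by simp

lemma card_T_strings_0: "card (T_strings s 0) = 1"
  by (simp add: T_strings_eq_words_avoiding words_avoiding_0)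

lemma card_T_strings_1: "card (T_strings s 1) = 2 * s"
  by (simp only: T_strings_eq_words_avoiding card_words_avoiding_1 card_Sigma_star)

lemma card_T_strings_closed_form:
  assumes "s \<ge> 2"
  defines "r \<equiv> sqrt (1 - 1 / real s)"
  shows "real (card (T_strings s n)) = real s ^ n / (2 * r) * ((1 + r) ^ (n + 1) - (1 - r) ^ (n + 1))"
proof -
  have s_pos: "real s > 0" and r_pos: "r > 0"
    using assms by (simp_all add: field_simps)
  have r_sq: "r\<^sup>2 = 1 - 1 / real s"
    using assms by (simp add: field_simps)
  define a where "a = real s * (1 + r)"
  define b where "b = real s * (1 - r)"
  have sum: "a + b = 2 * real s"
    by (simp add: a_def b_def algebra_simps)
  have "a * b = (real s)\<^sup>2 * (1 - r\<^sup>2)"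
    by (simp add: a_def b_def algebra_simps power2_eq_square)
  then have prod: "a * b = real s"
    using r_sq s_pos by (simp add: power2_eq_square)
  have "(a - b) * real (card (T_strings s n)) = a ^ (n + 1) - b ^ (n + 1)"
    by (rule linear_recurrence_closed_form)
      (simp_all only: sum prod card_T_strings_0 card_T_strings_1 card_T_strings_recurrence
        of_nat_1 of_nat_mult of_nat_numeral)
  moreover have "a - b = real s * (2 * r)"
    by (simp add: a_def b_def algebra_simps)
  moreover have "a ^ (n + 1) - b ^ (n + 1) = real s * (real s ^ n * ((1 + r) ^ (n + 1) - (1 - r) ^ (n + 1)))"
    unfolding a_def b_def power_mult_distrib by (simp add: right_diff_distrib)
  ultimately have "2 * r * real (card (T_strings s n)) = real s ^ n * ((1 + r) ^ (n + 1) - (1 - r) ^ (n + 1))"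
    using s_pos by simp
  then show ?thesis
    using r_pos by (simp add: field_simps)
qed

lemma card_T_strings_asymptotic:
  assumes "s \<ge> 2"
  defines "r \<equiv> sqrt (1 - 1 / real s)"
  shows "(\<lambda>n. real (card (T_strings s n)) / ((1 + r) / (2 * r) * (real s * (1 + r)) ^ n)) \<longlonglongrightarrow> 1"
proof -
  have s_pos: "real s > 0" and r_pos: "r > 0" and r_le_1: "r \<le> 1"
    using assms by (simp_all add: field_simps)
  define q where "q = (1 - r) / (1 + r)"
  have "\<bar>q\<bar> < 1"
    using r_pos r_le_1 by (simp add: q_def field_simps)
  then have "(\<lambda>n. q ^ (n + 1)) \<longlonglongrightarrow> 0"
    using LIMSEQ_Suc[OF LIMSEQ_power_zero[of q]] by simp
  then have "(\<lambda>n. 1 - q ^ (n + 1)) \<longlonglongrightarrow> 1"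
    using tendsto_diff[OF tendsto_const] by fastforce
  moreover have "real (card (T_strings s n)) / ((1 + r) / (2 * r) * (real s * (1 + r)) ^ n) = 1 - q ^ (n + 1)" for n
  proof -
    define D where "D = real s ^ n / (2 * r) * (1 + r) ^ (n + 1)"
    have "D > 0"
      using s_pos r_pos by (simp add: D_def)
    have "(1 + r) / (2 * r) * (real s * (1 + r)) ^ n = D"
      by (simp add: D_def power_mult_distrib)
    moreover have "real s ^ n / (2 * r) * (1 - r) ^ (n + 1) = D * q ^ (n + 1)"
      unfolding D_def q_def power_divide using r_pos by simp
    then have "real (card (T_strings s n)) = D * (1 - q ^ (n + 1))"
      unfolding card_T_strings_closed_form[OF assms(1)] r_def[symmetric] right_diff_distrib
        D_def[symmetric]
      by simp
    ultimately show ?thesis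
      using \<open>D > 0\<close> by simp
  qed
  ultimately show ?thesis by simp
qed

theorem lemma7:
  fixes s :: nat
  assumes "s \<ge> 1"
  shows "card (T_strings s 0) = 1
    \<and> card (T_strings s 1) = 2 * s
    \<and> (\<forall>n. real (card (T_strings s (n+2)))
           = 2 * real s * real (card (T_strings s (n+1))) - real s * real (card (T_strings s n)))
    \<and> (s \<ge> 2 \<longrightarrow>
        (\<forall>n. real (card (T_strings s n)) =
           real s ^ n / (2 * sqrt (1 - 1 / real s)) *
           ((1 + sqrt (1 - 1 / real s)) ^ (n+1) - (1 - sqrt (1 - 1 / real s)) ^ (n+1)))
        \<and> ((\<lambda>n. real (card (T_strings s n)) /
              ((1 + sqrt (1 - 1 / real s)) / (2 * sqrt (1 - 1 / real s)) *
               (real s * (1 + sqrt (1 - 1 / real s))) ^ n)) \<longlonglongrightarrow> 1))"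
proof (intro conjI allI impI)
  show "card (T_strings s 0) = 1"
    by (rule card_T_strings_0)
  show "card (T_strings s 1) = 2 * s"
    by (rule card_T_strings_1)
  show "real (card (T_strings s (n+2)))
      = 2 * real s * real (card (T_strings s (n+1))) - real s * real (card (T_strings s n))" for n
    by (rule card_T_strings_recurrence)
  assume "s \<ge> 2"
  then show "real (card (T_strings s n)) =
      real s ^ n / (2 * sqrt (1 - 1 / real s)) *
      ((1 + sqrt (1 - 1 / real s)) ^ (n+1) - (1 - sqrt (1 - 1 / real s)) ^ (n+1))" for n
    by (rule card_T_strings_closed_form)
  from \<open>s \<ge> 2\<close> show "(\<lambda>n. real (card (T_strings s n)) /
      ((1 + sqrt (1 - 1 / real s)) / (2 * sqrt (1 - 1 / real s)) *
       (real s * (1 + sqrt (1 - 1 / real s))) ^ n)) \<longlonglongrightarrow> 1"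
    by (rule card_T_strings_asymptotic)
qed

end
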